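(* Let $G=(m,n,\boldsymbol{c},\boldsymbol{d},r_{\max},r_{\min})$ be an interbank lending game, and let $\Phi:\boldsymbol{S}\to\mathbb{R}$ be defined by $$\Phi(\boldsymbol{s})=\sum_{j\in B}\sum_{i\in L}\bigl(r_j(\boldsymbol{s},i)-r_{\min}\bigr)s_{ij},\qquad r_j(\boldsymbol{s},z)=(r_{\min}-r_{\max})\frac{\sum_{i=1}^{z}s_{ij}}{d_j}+r_{\max}.$$ Then $G$ is an exact potential game with potential function $\Phi$, i.e. for every lender $k\in L$, all $s_k,s_k'\in S_k$ and all $\boldsymbol{s}_{-k}\in\boldsymbol{S}_{-k}$, $$\Phi(s_k',\boldsymbol{s}_{-k})-\Phi(s_k,\boldsymbol{s}_{-k})=u_k(s_k',\boldsymbol{s}_{-k})-u_k(s_k,\boldsymbol{s}_{-k}).$$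
   Context: An interbank lending game $G=(m,n,\boldsymbol{c},\boldsymbol{d},r_{\max},r_{\min})$ consists of positive integers $m,n$, budgets $\boldsymbol{c}=(c_1,\dots,c_m)\in\mathbb{R}_{>0}^m$, demands $\boldsymbol{d}=(d_1,\dots,d_n)\in\mathbb{R}_{>0}^n$ and reals $0<r_{\min}<r_{\max}$. The players are the lenders $L=\{1,\dots,m\}$; $B=\{1,\dots,n\}$ is the set of borrowers. Lender $i$'s strategy set is $S_i=\{s_i=(s_{i1},\dots,s_{in})\in\mathbb{R}_{\ge0}^n:\sum_{j\in B}s_{ij}\le c_i\}$, the strategy space is $\boldsymbol{S}=\prod_{i\in L}S_i$, a strategy profile is $\boldsymbol{s}=(s_{ij})_{i\in L,j\in B}\in\boldsymbol{S}$, $\boldsymbol{s}_{-i}$ denotes the strategies of all lenders other than $i$, $\boldsymbol{S}_{-i}=\prod_{k\ne i}S_k$, and $(s_i',\boldsymbol{s}_{-i})$ is the profile where $i$ plays $s_i'$ and the others play as in $\boldsymbol{s}_{-i}$. The interest rate of borrower $j$ is $r_j(\boldsymbol{s})=(r_{\min}-r_{\max})\frac{\sum_{i\in L}s_{ij}}{d_j}+r_{\max}$, and lender $i$'s utility is $u_i(\boldsymbol{s})=\sum_{j\in B}(r_j(\boldsymbol{s})-r_{\min})s_{ij}$. *)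

theory Defs
  imports Complex_Main
begin

text \<open>Lenders are 1..m, borrowers 1..n. A strategy of a lender is a function
  nat => real (only the values on 1..n matter); a strategy profile is
  s :: nat => nat => real with s i j the amount lender i lends to borrower j.\<close>

definition strategy_set :: "nat \<Rightarrow> real \<Rightarrow> (nat \<Rightarrow> real) set" where
  "strategy_set n ci = {x. (\<forall>j\<in>{1..n}. x j \<ge> 0) \<and> (\<Sum>j=1..n. x j) \<le> ci}"

definition profile_space :: "nat \<Rightarrow> nat \<Rightarrow> (nat \<Rightarrow> real) \<Rightarrow> (nat \<Rightarrow> nat \<Rightarrow> real) set" where
  "profile_space m n c = {s. \<forall>i\<in>{1..m}. s i \<in> strategy_set n (c i)}"

definition interest_rate :: "nat \<Rightarrow> (nat \<Rightarrow> real) \<Rightarrow> real \<Rightarrow> real \<Rightarrow> (nat \<Rightarrow> nat \<Rightarrow> real) \<Rightarrow> nat \<Rightarrow> real" where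
  "interest_rate m d rmax rmin s j = (rmin - rmax) * (\<Sum>i=1..m. s i j) / d j + rmax"

definition utility :: "nat \<Rightarrow> nat \<Rightarrow> (nat \<Rightarrow> real) \<Rightarrow> real \<Rightarrow> real \<Rightarrow> (nat \<Rightarrow> nat \<Rightarrow> real) \<Rightarrow> nat \<Rightarrow> real" where
  "utility m n d rmax rmin s i = (\<Sum>j=1..n. (interest_rate m d rmax rmin s j - rmin) * s i j)"

definition partial_rate :: "(nat \<Rightarrow> real) \<Rightarrow> real \<Rightarrow> real \<Rightarrow> (nat \<Rightarrow> nat \<Rightarrow> real) \<Rightarrow> nat \<Rightarrow> nat \<Rightarrow> real" where
  "partial_rate d rmax rmin s j z = (rmin - rmax) * (\<Sum>i=1..z. s i j) / d j + rmax"

definition potential :: "nat \<Rightarrow> nat \<Rightarrow> (nat \<Rightarrow> real) \<Rightarrow> real \<Rightarrow> real \<Rightarrow> (nat \<Rightarrow> nat \<Rightarrow> real) \<Rightarrow> real" where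
  "potential m n d rmax rmin s = (\<Sum>j=1..n. \<Sum>i=1..m. (partial_rate d rmax rmin s j i - rmin) * s i j)"

end

theory Submission
  imports Defs
begin

text \<open>For each borrower the triangular sum \<open>\<Sum>\<^sub>i (\<Sum>\<^sub>l\<^sub>\<le>\<^sub>i x\<^sub>l) x\<^sub>i\<close> occurring in
  \<open>\<Phi>\<close> equals \<open>((\<Sum>\<^sub>i x\<^sub>i)\<^sup>2 + \<Sum>\<^sub>i x\<^sub>i\<^sup>2) / 2\<close>, so \<open>\<Phi>\<close> is symmetric in the lenders.
  Expanding it around lender \<open>k\<close> shows that \<open>\<Phi> - u\<^sub>k\<close> is the potential of the game
  without lender \<open>k\<close>, which does not depend on \<open>s\<^sub>k\<close>.
  The identity is purely algebraic.\<close>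

lemma sum_partial_sums_mult:
  fixes x :: "nat \<Rightarrow> 'a::comm_ring_1"
  shows "2 * (\<Sum>i=1..m. (\<Sum>l=1..i. x l) * x i) = (\<Sum>i=1..m. x i)\<^sup>2 + (\<Sum>i=1..m. (x i)\<^sup>2)"
  by (induction m) (simp_all add: power2_eq_square algebra_simps)

lemma potential_symmetric_form:
  "potential m n d rmax rmin s =
    (\<Sum>j=1..n. (rmin - rmax) / d j * ((\<Sum>i=1..m. s i j)\<^sup>2 + (\<Sum>i=1..m. (s i j)\<^sup>2)) / 2
               + (rmax - rmin) * (\<Sum>i=1..m. s i j))"
  unfolding potential_def
proof (rule sum.cong[OF refl])
  fix j
  have "(\<Sum>i=1..m. (partial_rate d rmax rmin s j i - rmin) * s i j)
      = (rmin - rmax) / d j * (\<Sum>i=1..m. (\<Sum>l=1..i. s l j) * s i j) + (rmax - rmin) * (\<Sum>i=1..m. s i j)"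
    by (simp add: partial_rate_def sum_distrib_left sum_divide_distrib sum.distrib[symmetric] algebra_simps)
  also have "\<dots> = (rmin - rmax) / d j * ((\<Sum>i=1..m. s i j)\<^sup>2 + (\<Sum>i=1..m. (s i j)\<^sup>2)) / 2
               + (rmax - rmin) * (\<Sum>i=1..m. s i j)"
    unfolding sum_partial_sums_mult[symmetric] by simp
  finally show "(\<Sum>i=1..m. (partial_rate d rmax rmin s j i - rmin) * s i j) = \<dots>" .
qed

lemma potential_minus_utility:
  assumes "k \<in> {1..m}"
  shows "potential m n d rmax rmin s - utility m n d rmax rmin s k =
    (\<Sum>j=1..n. (rmin - rmax) / d j * ((\<Sum>i\<in>{1..m}-{k}. s i j)\<^sup>2 + (\<Sum>i\<in>{1..m}-{k}. (s i j)\<^sup>2)) / 2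
               + (rmax - rmin) * (\<Sum>i\<in>{1..m}-{k}. s i j))"
  unfolding potential_symmetric_form utility_def interest_rate_def sum_subtractf[symmetric]
proof (rule sum.cong[OF refl])
  fix j
  define a where "a = (rmin - rmax) / d j"
  have remove_k: "(\<Sum>i=1..m. g (s i j)) = g (s k j) + (\<Sum>i\<in>{1..m}-{k}. g (s i j))" for g :: "real \<Rightarrow> real"
    using sum.remove[OF finite_atLeastAtMost assms] .
  have "a * ((s k j + R)\<^sup>2 + ((s k j)\<^sup>2 + Q)) / 2 + (rmax - rmin) * (s k j + R)
          - (a * (s k j + R) + rmax - rmin) * s k j
      = a * (R\<^sup>2 + Q) / 2 + (rmax - rmin) * R" for R Q
    by (simp add: field_simps power2_eq_square)
  from this[of "\<Sum>i\<in>{1..m}-{k}. s i j" "\<Sum>i\<in>{1..m}-{k}. (s i j)\<^sup>2"]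
  show "(rmin - rmax) / d j * ((\<Sum>i=1..m. s i j)\<^sup>2 + (\<Sum>i=1..m. (s i j)\<^sup>2)) / 2
          + (rmax - rmin) * (\<Sum>i=1..m. s i j)
        - ((rmin - rmax) * (\<Sum>i=1..m. s i j) / d j + rmax - rmin) * s k j
      = (rmin - rmax) / d j * ((\<Sum>i\<in>{1..m}-{k}. s i j)\<^sup>2 + (\<Sum>i\<in>{1..m}-{k}. (s i j)\<^sup>2)) / 2
          + (rmax - rmin) * (\<Sum>i\<in>{1..m}-{k}. s i j)"
    using remove_k[of id] remove_k[of "\<lambda>x. x\<^sup>2"] by (simp add: a_def)
qed

lemma potential_minus_utility_fun_upd:
  assumes "k \<in> {1..m}"
  shows "potential m n d rmax rmin (s(k := v)) - utility m n d rmax rmin (s(k := v)) k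
       = potential m n d rmax rmin (s(k := v')) - utility m n d rmax rmin (s(k := v')) k"
  unfolding potential_minus_utility[OF assms] by (intro sum.cong refl) auto

theorem theorem2p1:
  fixes m n :: nat and c d :: "nat \<Rightarrow> real" and rmax rmin :: real
  assumes "m > 0" and "n > 0"
    and "\<forall>i\<in>{1..m}. c i > 0" and "\<forall>j\<in>{1..n}. d j > 0"
    and "0 < rmin" and "rmin < rmax"
  shows "\<forall>k\<in>{1..m}. \<forall>sk \<in> strategy_set n (c k). \<forall>sk' \<in> strategy_set n (c k).
           \<forall>s \<in> profile_space m n c.
             potential m n d rmax rmin (s(k := sk')) - potential m n d rmax rmin (s(k := sk))
             = utility m n d rmax rmin (s(k := sk')) k - utility m n d rmax rmin (s(k := sk)) k"
  using potential_minus_utility_fun_upd by (simp add: algebra_simps)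

end
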